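(* Let $\Sigma$ be a finite alphabet with $|\Sigma|\ge2$ and let $\delta$ be any Hamming compatible metric on $\Sigma^*$ (no uniformity assumed). Let $u,w\in\Sigma^*$ with $l(u)\ge l(w)$, and let $v$ be a Hamming opposite of $u$ satisfying $H(\underline{u},\underline{w})+H(\underline{v},\underline{w})=l(w)$. Then $\delta(u,w)\ge d_2(u,w)$ or $\delta(v,w)\ge d_2(v,w)$. Consequently, for every $w\in\Sigma^*$ there is a sequence of words $u_n\in\Sigma_n$ ($n\ge l(w)$) with $\delta(u_n,w)\ge d_2(u_n,w)$; in particular $\delta(u_n,w)\to\infty$ as $n\to\infty$.
   Context: $\Sigma_n$ is the set of words of length $n$ over $\Sigma$, $\Sigma^*$ the set of all finite words, $l(u)$ the length of $u$, $H$ the Hamming distance between equal-length words. For arbitrary $x,y$, if $l(x)\ge l(y)$, $\underline{x}$ is the prefix of $x$ of length $l(y)$ and $\underline{y}=y$ (symmetrically otherwise). Metrics are integer-valued; a metric $\delta$ on $\Sigma^*$ is Hamming compatible if $\delta(x,y)=H(x,y)$ whenever $l(x)=l(y)$. $d_2(x,y)=H(\underline{x},\underline{y})+\lceil |l(x)-l(y)|/2\rceil$. Two words of the same length $n$ are Hamming opposites if their Hamming distance is $n$. *)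

theory Defs
  imports Complex_Main
begin

text \<open>Words over an alphabet 'a are lists. Hamming distance for equal-length words
(only meaningful when the lengths agree).\<close>
definition hamming :: "'a list \<Rightarrow> 'a list \<Rightarrow> nat" where
  "hamming x y = card {i. i < length x \<and> x ! i \<noteq> y ! i}"

text \<open>Integer-valued (hence natural-valued, being nonnegative) metric on words.\<close>
definition is_metric :: "('a list \<Rightarrow> 'a list \<Rightarrow> nat) \<Rightarrow> bool" where
  "is_metric \<delta> \<longleftrightarrow>
     (\<forall>x y. \<delta> x y = 0 \<longleftrightarrow> x = y) \<and>
     (\<forall>x y. \<delta> x y = \<delta> y x) \<and>
     (\<forall>x y z. \<delta> x z \<le> \<delta> x y + \<delta> y z)"

definition hamming_compatible :: "('a list \<Rightarrow> 'a list \<Rightarrow> nat) \<Rightarrow> bool" where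
  "hamming_compatible \<delta> \<longleftrightarrow>
     (\<forall>x y. length x = length y \<longrightarrow> \<delta> x y = hamming x y)"

definition under :: "'a list \<Rightarrow> 'a list \<Rightarrow> 'a list" where
  "under x y = take (min (length x) (length y)) x"

definition d2 :: "'a list \<Rightarrow> 'a list \<Rightarrow> nat" where
  "d2 x y = hamming (under x y) (under y x)
     + nat \<lceil>\<bar>real (length x) - real (length y)\<bar> / 2\<rceil>"

definition hamming_opposite :: "'a list \<Rightarrow> 'a list \<Rightarrow> bool" where
  "hamming_opposite u v \<longleftrightarrow> length u = length v \<and> hamming u v = length u"

end

theory Submission
  imports Defs
begin

(*
  Let k = l(u) - l(w) \<ge> 0 and suppose both \<delta>(u,w) < d2(u,w) and
  \<delta>(v,w) < d2(v,w).  Since d2(x,w) = H(x_, w_) + \<lceil>k/2\<rceil> for x \<in> {u, v},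
  and \<delta> is integer valued, adding the two strict inequalities gives
  \<delta>(u,w) + \<delta>(w,v) \<le> l(w) + 2\<lceil>k/2\<rceil> - 2 \<le> l(w) + k - 1 < l(u).
  But \<delta>(u,v) = H(u,v) = l(u) by Hamming compatibility, contradicting the
  triangle inequality.

  For the consequence, pick two distinct letters a \<noteq> opp a for every letter
  (possible since |\<Sigma>| \<ge> 2).  For n \<ge> l(w) the words w a^(n-l(w)) and
  opp(w) opp(a)^(n-l(w)) are Hamming opposites satisfying the side condition,
  so one of them, u_n, satisfies \<delta>(u_n,w) \<ge> d2(u_n,w) \<ge> \<lceil>(n-l(w))/2\<rceil>,
  which tends to infinity.
*)

lemma hamming_refl: "hamming x x = 0"
  unfolding hamming_def by simp

lemma hamming_everywhere_different:
  assumes "\<forall>i<length x. x ! i \<noteq> y ! i"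
  shows "hamming x y = length x"
proof -
  have "{i. i < length x \<and> x ! i \<noteq> y ! i} = {..<length x}" using assms by auto
  then show ?thesis unfolding hamming_def by simp
qed

lemma nat_ceiling_half: "nat \<lceil>real k / 2\<rceil> = (k + 1) div 2"
proof -
  have "\<lceil>real k / 2\<rceil> = int ((k + 1) div 2)"
    by (subst ceiling_eq_iff) linarith
  then show ?thesis by simp
qed

lemma d2_longer:
  assumes "length x \<ge> length w"
  shows "d2 x w = hamming (under x w) (under w x) + (length x - length w + 1) div 2"
proof -
  have "\<bar>real (length x) - real (length w)\<bar> = real (length x - length w)"
    using assms by simp
  then have "d2 x w = hamming (under x w) (under w x) + nat \<lceil>real (length x - length w) / 2\<rceil>"
    unfolding d2_def by (simp only:)
  then show ?thesis by (simp only: nat_ceiling_half)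
qed

lemma opposite_dichotomy:
  assumes metric: "is_metric \<delta>" and compatible: "hamming_compatible \<delta>"
    and longer: "length u \<ge> length w" and opposite: "hamming_opposite u v"
    and split: "hamming (under u w) (under w u) + hamming (under v w) (under w v) = length w"
  shows "\<delta> u w \<ge> d2 u w \<or> \<delta> v w \<ge> d2 v w"
proof (rule ccontr)
  assume "\<not> ?thesis"
  then have below: "\<delta> u w < d2 u w" "\<delta> v w < d2 v w" by auto
  define c where "c = (length u - length w + 1) div 2"
  have same_length: "length v = length u" and far: "hamming u v = length u"
    using opposite unfolding hamming_opposite_def by auto
  have "d2 u w = hamming (under u w) (under w u) + c"
    using d2_longer[OF longer] c_def by simp
  moreover have "d2 v w = hamming (under v w) (under w v) + c"
    using d2_longer[of w v] longer same_length c_def by simp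
  ultimately have short: "\<delta> u w + \<delta> v w < length u"
    using below split longer c_def by linarith
  have "\<delta> u v \<le> \<delta> u w + \<delta> w v" and "\<delta> w v = \<delta> v w"
    using metric unfolding is_metric_def by blast+
  then have "\<delta> u v \<le> \<delta> u w + \<delta> v w" by simp
  moreover have "\<delta> u v = length u"
    using compatible same_length far unfolding hamming_compatible_def by simp
  ultimately show False using short by linarith
qed

lemma exists_other_letter:
  assumes "card (UNIV :: 'a::finite set) \<ge> 2"
  shows "\<exists>y::'a. y \<noteq> x"
proof (rule ccontr)
  assume "\<not> (\<exists>y::'a. y \<noteq> x)"
  then have singleton: "(UNIV :: 'a set) = {x}" by auto
  have "card (UNIV :: 'a set) = 1" by (subst singleton) simp
  then show False using assms by simp
qed

lemma dominating_words:
  fixes \<delta> :: "('a::finite) list \<Rightarrow> 'a list \<Rightarrow> nat"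
  assumes alphabet: "card (UNIV :: 'a set) \<ge> 2"
    and metric: "is_metric \<delta>" and compatible: "hamming_compatible \<delta>"
  shows "\<exists>us. \<forall>n \<ge> length w. length (us n) = n \<and> \<delta> (us n) w \<ge> d2 (us n) w"
proof -
  define opp :: "'a \<Rightarrow> 'a" where "opp x = (SOME y. y \<noteq> x)" for x
  have opp_differs: "opp x \<noteq> x" for x
    unfolding opp_def using someI_ex[OF exists_other_letter[OF alphabet]] .
  obtain a :: 'a where True by simp
  define U where "U n = w @ replicate (n - length w) a" for n
  define V where "V n = map opp w @ replicate (n - length w) (opp a)" for n
  have "\<exists>x. length x = n \<and> \<delta> x w \<ge> d2 x w" if n: "n \<ge> length w" for n
  proof -
    have lengths: "length (U n) = n" "length (V n) = n"
      using n unfolding U_def V_def by auto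
    have "\<forall>i<length (U n). U n ! i \<noteq> V n ! i"
      unfolding U_def V_def by (auto simp: nth_append opp_differs[symmetric])
    then have "hamming_opposite (U n) (V n)"
      using hamming_everywhere_different lengths unfolding hamming_opposite_def by metis
    moreover have "under (U n) w = w" "under w (U n) = w"
      "under (V n) w = map opp w" "under w (V n) = w"
      unfolding under_def U_def V_def using n by auto
    moreover have "hamming (map opp w) w = length w"
      using hamming_everywhere_different[of "map opp w" w] opp_differs by simp
    ultimately have "\<delta> (U n) w \<ge> d2 (U n) w \<or> \<delta> (V n) w \<ge> d2 (V n) w"
      using opposite_dichotomy[OF metric compatible] lengths n by (simp add: hamming_refl)
    then show ?thesis using lengths by blast
  qed
  then have "\<forall>n. \<exists>x. n \<ge> length w \<longrightarrow> length x = n \<and> \<delta> x w \<ge> d2 x w"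
    by blast
  then show ?thesis by (rule choice)
qed

lemma filterlim_at_top_half_bound:
  fixes f :: "nat \<Rightarrow> nat"
  assumes "\<forall>n \<ge> m. n \<le> 2 * f n + m"
  shows "filterlim f at_top sequentially"
  unfolding filterlim_at_top
proof
  fix Z :: nat
  show "\<forall>\<^sub>F n in sequentially. Z \<le> f n"
  proof (rule eventually_sequentiallyI[of "m + 2 * Z"])
    fix n assume "m + 2 * Z \<le> n"
    moreover have "n \<le> 2 * f n + m" using assms calculation by simp
    ultimately show "Z \<le> f n" by linarith
  qed
qed

theorem mainTheorem9:
  fixes \<delta> :: "('a::finite) list \<Rightarrow> 'a list \<Rightarrow> nat"
  assumes "card (UNIV :: 'a set) \<ge> 2"
    and "is_metric \<delta>"
    and "hamming_compatible \<delta>"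
  shows "(\<forall>u v w. length u \<ge> length w \<longrightarrow> hamming_opposite u v \<longrightarrow>
            hamming (under u w) (under w u) + hamming (under v w) (under w v) = length w \<longrightarrow>
            \<delta> u w \<ge> d2 u w \<or> \<delta> v w \<ge> d2 v w)
       \<and> (\<forall>w. \<exists>us :: nat \<Rightarrow> 'a list.
            (\<forall>n \<ge> length w. length (us n) = n \<and> \<delta> (us n) w \<ge> d2 (us n) w)
            \<and> filterlim (\<lambda>n. \<delta> (us n) w) at_top sequentially)"
proof (intro conjI allI impI)
  show "\<delta> u w \<ge> d2 u w \<or> \<delta> v w \<ge> d2 v w"
    if "length u \<ge> length w" "hamming_opposite u v"
      "hamming (under u w) (under w u) + hamming (under v w) (under w v) = length w"
    for u v w :: "'a list"
    using opposite_dichotomy[OF assms(2,3)] that by blast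
next
  fix w :: "'a list"
  obtain us where us: "\<forall>n \<ge> length w. length (us n) = n \<and> \<delta> (us n) w \<ge> d2 (us n) w"
    using dominating_words[OF assms] by blast
  have "\<forall>n \<ge> length w. n \<le> 2 * \<delta> (us n) w + length w"
  proof (intro allI impI)
    fix n assume n: "n \<ge> length w"
    then have len: "length (us n) = n" and dominates: "d2 (us n) w \<le> \<delta> (us n) w"
      using us by blast+
    have "(n - length w + 1) div 2 \<le> d2 (us n) w"
      using d2_longer[of w "us n"] len n by simp
    then show "n \<le> 2 * \<delta> (us n) w + length w" using dominates n by linarith
  qed
  then have "filterlim (\<lambda>n. \<delta> (us n) w) at_top sequentially"
    by (rule filterlim_at_top_half_bound)
  then show "\<exists>us :: nat \<Rightarrow> 'a list.
      (\<forall>n \<ge> length w. length (us n) = n \<and> \<delta> (us n) w \<ge> d2 (us n) w)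
      \<and> filterlim (\<lambda>n. \<delta> (us n) w) at_top sequentially"
    using us by blast
qed

end
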